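(* Let $k\ge 2$ be an even integer and let $f:\{0,1\}^d\to\{0,1\}$ be $\varepsilon$-far from linear. If $x_1,\dots,x_k$ are sampled uniformly and independently from $\{0,1\}^d$, then $$\Pr\Big[\sum_{i=1}^k f(x_i)\neq f(x_1\oplus\cdots\oplus x_k)\Big]\ge\varepsilon,$$ where the sum on the left is taken mod 2.
   Context: $\oplus$ denotes bitwise XOR. A function $f:\{0,1\}^d\to\{0,1\}$ is linear if there is $S\subseteq[d]$ with $f(x)=\sum_{i\in S}x[i]\bmod 2$ for all $x$. $f$ is $\varepsilon$-far from linear if $f$ differs from every linear function on at least an $\varepsilon$ fraction of $\{0,1\}^d$. *)

theory Defs
  imports "HOL-Probability.Probability"
begin

text \<open>The Boolean cube {0,1}^d: bit vectors are functions nat => bool, true = 1,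
  with all coordinates at index >= d equal to 0 (False).\<close>
definition cube :: "nat \<Rightarrow> (nat \<Rightarrow> bool) set" where
  "cube d = {x. \<forall>i. d \<le> i \<longrightarrow> \<not> x i}"

definition bxor :: "(nat \<Rightarrow> bool) \<Rightarrow> (nat \<Rightarrow> bool) \<Rightarrow> (nat \<Rightarrow> bool)" where
  "bxor x y = (\<lambda>i. x i \<noteq> y i)"

definition bxor_list :: "nat \<Rightarrow> (nat \<Rightarrow> nat \<Rightarrow> bool) \<Rightarrow> (nat \<Rightarrow> bool)" where
  "bxor_list k xs = foldr (\<lambda>j acc. bxor (xs j) acc) [0..<k] (\<lambda>_. False)"

definition lin_fun :: "nat set \<Rightarrow> (nat \<Rightarrow> bool) \<Rightarrow> bool" where
  "lin_fun S x = odd (card {i\<in>S. x i})"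

definition is_linear :: "nat \<Rightarrow> ((nat \<Rightarrow> bool) \<Rightarrow> bool) \<Rightarrow> bool" where
  "is_linear d f \<longleftrightarrow> (\<exists>S \<subseteq> {..<d}. \<forall>x\<in>cube d. f x = lin_fun S x)"

definition dist_frac :: "nat \<Rightarrow> ((nat \<Rightarrow> bool) \<Rightarrow> bool) \<Rightarrow> ((nat \<Rightarrow> bool) \<Rightarrow> bool) \<Rightarrow> real" where
  "dist_frac d f g = real (card {x\<in>cube d. f x \<noteq> g x}) / 2 ^ d"

definition far_from_linear :: "nat \<Rightarrow> real \<Rightarrow> ((nat \<Rightarrow> bool) \<Rightarrow> bool) \<Rightarrow> bool" where
  "far_from_linear d eps f \<longleftrightarrow>
     (\<forall>S \<subseteq> {..<d}. dist_frac d f (lin_fun S) \<ge> eps)"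

definition tuples :: "nat \<Rightarrow> nat \<Rightarrow> (nat \<Rightarrow> nat \<Rightarrow> bool) set" where
  "tuples d k = PiE {..<k} (\<lambda>_. cube d)"

end

theory Submission
  imports Defs
begin

text \<open>Write \<open>F = (-1)^f\<close> and \<open>c(S)\<close> for the Fourier coefficients of \<open>F\<close> in the Walsh
  basis \<open>\<chi>\<^sub>S\<close>. As \<open>\<chi>\<^sub>S\<close> is multiplicative under XOR, the expectation of
  \<open>F(x\<^sub>1)\<cdots>F(x\<^sub>k) F(x\<^sub>1 \<oplus> \<cdots> \<oplus> x\<^sub>k)\<close> is \<open>\<Sum>\<^sub>S c(S)^(k+1)\<close>, so the test rejects with
  probability \<open>(1 - \<Sum>\<^sub>S c(S)^(k+1)) / 2\<close>. Farness means \<open>c(S) = 1 - 2 dist(f, \<chi>\<^sub>S) \<le> 1 - 2\<epsilon>\<close>.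
  Since \<open>k + 1\<close> is odd, Parseval's \<open>\<Sum>\<^sub>S c(S)\<^sup>2 = 1\<close> bounds \<open>\<Sum>\<^sub>S c(S)^(k+1)\<close> by \<open>1 - 2\<epsilon>\<close>;
  if \<open>1 - 2\<epsilon> < 0\<close>, then \<open>\<Sum>\<^sub>S c(S) = F(0) \<ge> -1\<close> forces every \<open>c(S)\<close> to be \<open>-1\<close>.\<close>

definition sgn_bool :: "bool \<Rightarrow> real" where
  "sgn_bool b = (if b then -1 else 1)"

definition walsh :: "nat set \<Rightarrow> (nat \<Rightarrow> bool) \<Rightarrow> real" where
  "walsh S x = (\<Prod>i\<in>S. sgn_bool (x i))"

definition fourier_coeff :: "nat \<Rightarrow> ((nat \<Rightarrow> bool) \<Rightarrow> bool) \<Rightarrow> nat set \<Rightarrow> real" where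
  "fourier_coeff d f S = (\<Sum>x\<in>cube d. sgn_bool (f x) * walsh S x) / 2 ^ d"

lemma sgn_bool_mult: "sgn_bool a * sgn_bool b = sgn_bool (a \<noteq> b)"
  by (simp add: sgn_bool_def)

lemma sgn_bool_square: "sgn_bool a * sgn_bool a = 1"
  by (simp add: sgn_bool_def)

lemma of_bool_neq_sgn_bool: "of_bool (a \<noteq> b) = (1 - sgn_bool a * sgn_bool b) / 2"
  by (simp add: sgn_bool_def)

lemma prod_sgn_bool:
  assumes "finite A"
  shows "(\<Prod>i\<in>A. sgn_bool (P i)) = sgn_bool (odd (card {i\<in>A. P i}))"
  using assms
proof (induction A rule: finite_induct)
  case empty
  then show ?case by (simp add: sgn_bool_def)
next
  case (insert a A)
  have "{i\<in>insert a A. P i} = (if P a then insert a {i\<in>A. P i} else {i\<in>A. P i})"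
    by auto
  with insert show ?case by (auto simp: sgn_bool_def)
qed

lemma bij_betw_cube_Pow: "bij_betw (\<lambda>x. {i. x i}) (cube d) (Pow {..<d})"
proof (rule bij_betw_imageI)
  show "inj_on (\<lambda>x. {i. x i}) (cube d)"
    by (rule inj_onI) (auto simp: fun_eq_iff)
  show "(\<lambda>x. {i. x i}) ` cube d = Pow {..<d}"
  proof
    show "(\<lambda>x. {i. x i}) ` cube d \<subseteq> Pow {..<d}"
      by (auto simp: cube_def not_le[symmetric])
    show "Pow {..<d} \<subseteq> (\<lambda>x. {i. x i}) ` cube d"
    proof
      fix A assume "A \<in> Pow {..<d}"
      then have "(\<lambda>i. i \<in> A) \<in> cube d" by (auto simp: cube_def)
      then show "A \<in> (\<lambda>x. {i. x i}) ` cube d" by force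
    qed
  qed
qed

lemma card_cube: "card (cube d) = 2 ^ d"
  using bij_betw_same_card[OF bij_betw_cube_Pow[of d]] by (simp add: card_Pow)

lemma finite_cube: "finite (cube d)"
  using bij_betw_finite[OF bij_betw_cube_Pow[of d]] by simp

lemma zero_in_cube: "(\<lambda>_. False) \<in> cube d"
  by (simp add: cube_def)

lemma bxor_in_cube: "x \<in> cube d \<Longrightarrow> y \<in> cube d \<Longrightarrow> bxor x y \<in> cube d"
  by (auto simp: cube_def bxor_def)

lemma bxor_list_in_cube:
  assumes "\<And>i. i < k \<Longrightarrow> xs i \<in> cube d"
  shows "bxor_list k xs \<in> cube d"
proof -
  have "set l \<subseteq> {..<k} \<Longrightarrow> foldr (\<lambda>j acc. bxor (xs j) acc) l (\<lambda>_. False) \<in> cube d" for l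
    by (induction l) (auto simp: bxor_in_cube zero_in_cube assms)
  from this[of "[0..<k]"] show ?thesis by (simp add: bxor_list_def atLeast0LessThan)
qed

lemma card_tuples: "card (tuples d k) = 2 ^ (d * k)"
  by (simp add: tuples_def card_PiE card_cube power_mult)

lemma finite_tuples: "finite (tuples d k)"
  by (simp add: tuples_def finite_PiE finite_cube)

lemma tuples_nonempty: "tuples d k \<noteq> {}"
  using zero_in_cube by (auto simp: tuples_def PiE_eq_empty_iff)

lemma walsh_zero [simp]: "walsh S (\<lambda>_. False) = 1"
  by (simp add: walsh_def sgn_bool_def)

lemma walsh_eq_lin_fun: "finite S \<Longrightarrow> walsh S x = sgn_bool (lin_fun S x)"
  by (simp add: walsh_def lin_fun_def prod_sgn_bool)

lemma walsh_bxor: "finite S \<Longrightarrow> walsh S (bxor x y) = walsh S x * walsh S y"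
  by (simp add: walsh_def bxor_def sgn_bool_mult prod.distrib[symmetric])

lemma walsh_bxor_list: "finite S \<Longrightarrow> walsh S (bxor_list k xs) = (\<Prod>i<k. walsh S (xs i))"
proof -
  assume S: "finite S"
  have "walsh S (foldr (\<lambda>j acc. bxor (xs j) acc) l (\<lambda>_. False)) = (\<Prod>j\<leftarrow>l. walsh S (xs j))"
    for l by (induction l) (simp_all add: walsh_bxor S)
  then show ?thesis
    by (simp add: bxor_list_def prod.distinct_set_conv_list[symmetric] atLeast0LessThan)
qed

lemma sum_walsh:
  assumes "z \<in> cube d"
  shows "(\<Sum>S\<in>Pow {..<d}. walsh S z) = (if z = (\<lambda>_. False) then 2 ^ d else 0)"
proof -
  have "(\<Sum>S\<in>Pow {..<d}. walsh S z) = (\<Prod>i<d. sgn_bool (z i) + 1)"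
    by (simp add: prod_add walsh_def)
  also have "\<dots> = (if z = (\<lambda>_. False) then 2 ^ d else 0)"
  proof (cases "z = (\<lambda>_. False)")
    case False
    with assms obtain i where "i < d" "z i"
      by (auto simp: cube_def fun_eq_iff not_le[symmetric])
    then show ?thesis by (subst prod_zero) (auto simp: sgn_bool_def)
  qed (simp add: sgn_bool_def)
  finally show ?thesis .
qed

lemma walsh_orthogonal:
  assumes "x \<in> cube d" "y \<in> cube d"
  shows "(\<Sum>S\<in>Pow {..<d}. walsh S x * walsh S y) = (if x = y then 2 ^ d else 0)"
proof -
  have "(\<Sum>S\<in>Pow {..<d}. walsh S x * walsh S y) = (\<Sum>S\<in>Pow {..<d}. walsh S (bxor x y))"
    by (rule sum.cong) (auto simp: walsh_bxor finite_subset)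
  also have "\<dots> = (if x = y then 2 ^ d else 0)"
    by (simp add: sum_walsh bxor_in_cube assms) (auto simp: bxor_def fun_eq_iff)
  finally show ?thesis .
qed

lemma fourier_expansion:
  assumes "x \<in> cube d"
  shows "(\<Sum>S\<in>Pow {..<d}. fourier_coeff d f S * walsh S x) = sgn_bool (f x)"
proof -
  have "(\<Sum>S\<in>Pow {..<d}. fourier_coeff d f S * walsh S x)
      = (\<Sum>y\<in>cube d. sgn_bool (f y) * (\<Sum>S\<in>Pow {..<d}. walsh S y * walsh S x)) / 2 ^ d"
    unfolding fourier_coeff_def
    by (simp add: sum_divide_distrib sum_distrib_left sum_distrib_right mult.assoc)
       (rule sum.swap)
  also have "\<dots> = (\<Sum>y\<in>cube d. if y = x then sgn_bool (f y) * 2 ^ d else 0) / 2 ^ d"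
    by (rule arg_cong[where f = "\<lambda>t. t / 2 ^ d"], rule sum.cong) (auto simp: walsh_orthogonal assms)
  also have "\<dots> = sgn_bool (f x)"
    using assms finite_cube by simp
  finally show ?thesis .
qed

lemma parseval: "(\<Sum>S\<in>Pow {..<d}. (fourier_coeff d f S)\<^sup>2) = 1"
proof -
  have "(\<Sum>S\<in>Pow {..<d}. (fourier_coeff d f S)\<^sup>2)
      = (\<Sum>y\<in>cube d. sgn_bool (f y) * (\<Sum>S\<in>Pow {..<d}. fourier_coeff d f S * walsh S y)) / 2 ^ d"
    unfolding power2_eq_square
    by (subst (2) fourier_coeff_def)
       (simp add: sum_divide_distrib sum_distrib_left sum_distrib_right mult_ac, rule sum.swap)
  also have "\<dots> = 1"
    by (simp add: fourier_expansion sgn_bool_square card_cube cong: sum.cong)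
  finally show ?thesis .
qed

lemma sum_fourier_coeff: "(\<Sum>S\<in>Pow {..<d}. fourier_coeff d f S) = sgn_bool (f (\<lambda>_. False))"
  using fourier_expansion[OF zero_in_cube, of d f] by simp

lemma fourier_coeff_eq_dist_frac:
  assumes "S \<subseteq> {..<d}"
  shows "fourier_coeff d f S = 1 - 2 * dist_frac d f (lin_fun S)"
proof -
  have S: "finite S" using assms finite_subset by blast
  have "(\<Sum>x\<in>cube d. sgn_bool (f x) * walsh S x) = (\<Sum>x\<in>cube d. 1 - 2 * of_bool (f x \<noteq> lin_fun S x))"
    by (rule sum.cong) (auto simp: walsh_eq_lin_fun S sgn_bool_def)
  also have "\<dots> = 2 ^ d - 2 * real (card {x\<in>cube d. f x \<noteq> lin_fun S x})"
    by (simp add: sum_subtractf sum_distrib_left[symmetric] sum_of_bool_eq Int_def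
        finite_cube card_cube)
  finally show ?thesis
    by (simp add: fourier_coeff_def dist_frac_def diff_divide_distrib)
qed

lemma sum_tuples_correlation:
  "(\<Sum>xs\<in>tuples d k. (\<Prod>i<k. sgn_bool (f (xs i))) * sgn_bool (f (bxor_list k xs)))
     = 2 ^ (d * k) * (\<Sum>S\<in>Pow {..<d}. fourier_coeff d f S ^ (k + 1))"
proof -
  have fin: "S \<subseteq> {..<d} \<Longrightarrow> finite S" for S
    by (auto intro: finite_subset)
  have expand: "sgn_bool (f (bxor_list k xs))
      = (\<Sum>S\<in>Pow {..<d}. fourier_coeff d f S * (\<Prod>i<k. walsh S (xs i)))"
    if "xs \<in> tuples d k" for xs
  proof -
    have "bxor_list k xs \<in> cube d"
      using that by (intro bxor_list_in_cube) (auto simp: tuples_def)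
    then have "sgn_bool (f (bxor_list k xs))
        = (\<Sum>S\<in>Pow {..<d}. fourier_coeff d f S * walsh S (bxor_list k xs))"
      by (simp add: fourier_expansion)
    also have "\<dots> = (\<Sum>S\<in>Pow {..<d}. fourier_coeff d f S * (\<Prod>i<k. walsh S (xs i)))"
      by (rule sum.cong) (auto simp: walsh_bxor_list fin)
    finally show ?thesis .
  qed
  have "(\<Sum>xs\<in>tuples d k. (\<Prod>i<k. sgn_bool (f (xs i))) * sgn_bool (f (bxor_list k xs)))
      = (\<Sum>S\<in>Pow {..<d}. fourier_coeff d f S *
           (\<Sum>xs\<in>tuples d k. \<Prod>i<k. sgn_bool (f (xs i)) * walsh S (xs i)))"
    by (simp add: expand sum_distrib_left sum_distrib_right prod.distrib mult_ac cong: sum.cong)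
       (rule sum.swap)
  also have "\<dots> = (\<Sum>S\<in>Pow {..<d}. fourier_coeff d f S *
                     (\<Prod>i<k. \<Sum>x\<in>cube d. sgn_bool (f x) * walsh S x))"
    unfolding tuples_def
    by (rule sum.cong[OF refl], subst prod_sum_PiE) (auto simp: finite_cube)
  also have "\<dots> = (\<Sum>S\<in>Pow {..<d}. fourier_coeff d f S * (2 ^ d * fourier_coeff d f S) ^ k)"
    by (simp add: fourier_coeff_def)
  also have "\<dots> = 2 ^ (d * k) * (\<Sum>S\<in>Pow {..<d}. fourier_coeff d f S ^ (k + 1))"
    by (simp add: sum_distrib_left power_mult power_mult_distrib mult_ac)
  finally show ?thesis .
qed

lemma prob_reject_eq_fourier:
  "measure_pmf.prob (pmf_of_set (tuples d k))
     {xs. odd (card {i\<in>{..<k}. f (xs i)}) \<noteq> f (bxor_list k xs)}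
   = (1 - (\<Sum>S\<in>Pow {..<d}. fourier_coeff d f S ^ (k + 1))) / 2"
proof -
  let ?T = "tuples d k" and ?B = "{xs. odd (card {i\<in>{..<k}. f (xs i)}) \<noteq> f (bxor_list k xs)}"
  have "real (card (?T \<inter> ?B))
      = (\<Sum>xs\<in>?T. (1 - (\<Prod>i<k. sgn_bool (f (xs i))) * sgn_bool (f (bxor_list k xs))) / 2)"
    by (simp add: finite_tuples sum.If_cases Int_def prod_sgn_bool of_bool_neq_sgn_bool[symmetric]
        of_bool_def)
  also have "\<dots> = (2 ^ (d * k) - 2 ^ (d * k) * (\<Sum>S\<in>Pow {..<d}. fourier_coeff d f S ^ (k + 1))) / 2"
    by (simp add: sum_divide_distrib[symmetric] sum_subtractf card_tuples sum_tuples_correlation)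
  finally show ?thesis
    by (simp add: measure_pmf_of_set[OF tuples_nonempty finite_tuples] card_tuples field_simps)
qed

lemma abs_le_one_if_sum_squares_eq_one:
  fixes a :: "'i \<Rightarrow> real"
  assumes "finite P" "(\<Sum>S\<in>P. (a S)\<^sup>2) = 1" "S \<in> P"
  shows "\<bar>a S\<bar> \<le> 1"
proof -
  have "(a S)\<^sup>2 \<le> 1"
    using member_le_sum[of S P "\<lambda>S. (a S)\<^sup>2"] assms by simp
  then show ?thesis by (simp add: abs_square_le_1)
qed

lemma negative_sum_squares_eq_one_imp_minus_one:
  fixes a :: "'i \<Rightarrow> real"
  assumes "finite P" and sum_sq: "(\<Sum>S\<in>P. (a S)\<^sup>2) = 1" and sum_ge: "(\<Sum>S\<in>P. a S) \<ge> -1"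
    and neg: "\<And>S. S \<in> P \<Longrightarrow> a S < 0" and "S \<in> P"
  shows "a S = -1"
proof -
  have sq_le_abs: "(a S)\<^sup>2 \<le> \<bar>a S\<bar>" if "S \<in> P" for S
  proof -
    have "(a S)\<^sup>2 = \<bar>a S\<bar> * \<bar>a S\<bar>" by (simp add: power2_eq_square)
    also have "\<dots> \<le> \<bar>a S\<bar>"
      using abs_le_one_if_sum_squares_eq_one[OF assms(1) sum_sq that] by (rule mult_left_le) simp
    finally show ?thesis .
  qed
  \<comment> \<open>\<open>\<Sum> \<bar>a\<bar> = - \<Sum> a \<le> 1 = \<Sum> a\<^sup>2\<close>, so \<open>a\<^sup>2 \<le> \<bar>a\<bar>\<close> is an equality throughout.\<close>
  have "(\<Sum>S\<in>P. \<bar>a S\<bar>) = - (\<Sum>S\<in>P. a S)"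
    by (simp add: sum_negf[symmetric] abs_of_neg neg cong: sum.cong)
  then have "(\<Sum>S\<in>P. \<bar>a S\<bar> - (a S)\<^sup>2) \<le> 0"
    using sum_ge sum_sq by (simp add: sum_subtractf)
  then have "\<forall>S\<in>P. \<bar>a S\<bar> - (a S)\<^sup>2 = 0"
    using sum_nonneg_eq_0_iff[OF assms(1), of "\<lambda>S. \<bar>a S\<bar> - (a S)\<^sup>2"] sq_le_abs
    by (simp add: order_antisym sum_nonneg)
  then have "\<bar>a S\<bar> = (a S)\<^sup>2"
    using \<open>S \<in> P\<close> by simp
  then have "- a S = (a S)\<^sup>2"
    using neg[OF \<open>S \<in> P\<close>] by (simp add: abs_of_neg)
  then have "a S * (a S + 1) = 0"
    by (simp add: power2_eq_square algebra_simps)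
  then show ?thesis using neg[OF \<open>S \<in> P\<close>] by simp
qed

lemma sum_odd_power_le:
  fixes a :: "'i \<Rightarrow> real" and n :: nat
  assumes "finite P" and sum_sq: "(\<Sum>S\<in>P. (a S)\<^sup>2) = 1"
    and le: "\<And>S. S \<in> P \<Longrightarrow> a S \<le> c" and sum_ge: "(\<Sum>S\<in>P. a S) \<ge> -1"
    and "odd n" "n \<ge> 3"
  shows "(\<Sum>S\<in>P. a S ^ n) \<le> c"
proof (cases "c \<ge> 0")
  case True
  have "a S ^ n \<le> c * (a S)\<^sup>2" if "S \<in> P" for S
  proof (cases "a S > 0")
    case True
    have "a S ^ (n - 2) \<le> a S ^ 1"
      using abs_le_one_if_sum_squares_eq_one[OF assms(1) sum_sq that] True \<open>n \<ge> 3\<close>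
      by (intro power_decreasing) auto
    also have "\<dots> \<le> c" using le[OF that] by simp
    finally have "(a S)\<^sup>2 * a S ^ (n - 2) \<le> (a S)\<^sup>2 * c" by (simp add: mult_left_mono)
    moreover have "a S ^ n = (a S)\<^sup>2 * a S ^ (n - 2)"
    proof -
      have "n = 2 + (n - 2)" using \<open>n \<ge> 3\<close> by simp
      then show ?thesis by (metis power_add)
    qed
    ultimately show ?thesis by (simp add: mult.commute)
  next
    case False
    then have "a S ^ n \<le> 0"
      unfolding power_le_zero_eq using \<open>odd n\<close> odd_pos by auto
    also have "0 \<le> c * (a S)\<^sup>2" using \<open>c \<ge> 0\<close> by simp
    finally show ?thesis .
  qed
  then have "(\<Sum>S\<in>P. a S ^ n) \<le> (\<Sum>S\<in>P. c * (a S)\<^sup>2)" by (rule sum_mono)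
  also have "\<dots> = c" using sum_sq by (simp add: sum_distrib_left[symmetric])
  finally show ?thesis .
next
  case False
  then have neg: "a S < 0" if "S \<in> P" for S using le[OF that] by force
  have minus_one: "a S = -1" if "S \<in> P" for S
    using negative_sum_squares_eq_one_imp_minus_one[OF assms(1) sum_sq sum_ge] neg that by blast
  have "P \<noteq> {}" using sum_sq by auto
  then obtain S0 where "S0 \<in> P" by blast
  have "(\<Sum>S\<in>P. a S ^ n) = (\<Sum>S\<in>P. -1)"
    by (rule sum.cong) (simp_all add: minus_one \<open>odd n\<close>)
  also have "\<dots> = - real (card P)" by simp
  also have "\<dots> \<le> -1"
    using \<open>P \<noteq> {}\<close> assms(1) by (simp add: Suc_le_eq card_gt_0_iff)
  also have "\<dots> \<le> c" using le[OF \<open>S0 \<in> P\<close>] minus_one[OF \<open>S0 \<in> P\<close>] by simp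
  finally show ?thesis .
qed

theorem theorem1p2:
  fixes d k :: nat and eps :: real and f :: "(nat \<Rightarrow> bool) \<Rightarrow> bool"
  assumes "even k" and "k \<ge> 2"
    and "far_from_linear d eps f"
  shows "measure_pmf.prob (pmf_of_set (tuples d k))
           {xs. odd (card {i\<in>{..<k}. f (xs i)}) \<noteq> f (bxor_list k xs)} \<ge> eps"
proof -
  have "(\<Sum>S\<in>Pow {..<d}. fourier_coeff d f S ^ (k + 1)) \<le> 1 - 2 * eps"
  proof (rule sum_odd_power_le)
    show "fourier_coeff d f S \<le> 1 - 2 * eps" if "S \<in> Pow {..<d}" for S
      using that assms(3) by (auto simp: fourier_coeff_eq_dist_frac far_from_linear_def)
    show "(\<Sum>S\<in>Pow {..<d}. fourier_coeff d f S) \<ge> -1"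
      by (simp add: sum_fourier_coeff sgn_bool_def)
  qed (use assms(1,2) parseval in auto)
  then show ?thesis by (subst prob_reject_eq_fourier) (simp add: field_simps)
qed

end
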